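(* Let $I\subset\mathbb{R}$ be an open interval and $\lambda:I\to\mathbb{R}$ a non-constant positive smooth function, and fix a choice of sign $\pm$. Let $\tilde M(1-\lambda^2,2(1\pm\lambda))$ be the contact metric $3$-manifold described in the context. For constants $b\in\mathbb{R}$ and $c\in I$, consider the curve $\gamma_{\{b,c\}}(s)=(b,s,c)$ in $\tilde M(1-\lambda^2,2(1\pm\lambda))$ (it is parametrized by arclength, is a Legendre curve, and its unit tangent is $e_2$). Then $\gamma_{\{b,c\}}$ is proper biharmonic if and only if $\lambda'(c)\neq 0$ and $$\Big(\lambda\lambda''-2(\lambda')^2-8\lambda^2(1\pm\lambda)\Big)\Big|_{z=c}=0,$$ where $'$ denotes $d/dz$ and the sign $\pm$ is the same as the one in $\tilde M(1-\lambda^2,2(1\pm\lambda))$.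
   Context: Definition of $\tilde M(1-\lambda^2,2(1\pm\lambda))$: Let $\lambda:I\to\mathbb{R}$ be a non-constant positive smooth function on an open interval $I$, $\lambda'=d\lambda/dz$. On $\tilde M^3=\mathbb{R}^2\times I\subset\mathbb{R}^3$ with coordinates $(x,y,z)$ consider the vector fields $e_1=\partial_x$, $e_2=\partial_y$, $e_3=(\pm 2y+f(z))\partial_x+\big(2\lambda x-\frac{\lambda'}{2\lambda}y+h(z)\big)\partial_y+\partial_z$, where $f,h$ are arbitrary smooth functions of $z$. Let $g$ be the Riemannian metric with $g(e_i,e_j)=\delta_{ij}$, $\xi=e_1$, $\eta$ the $1$-form dual to $e_1$, and $\phi$ the $(1,1)$-tensor with $\phi e_1=0$, $\phi e_2=\pm e_3$, $\phi e_3=\mp e_2$ (all double signs correspond to the sign in $\pm 2y$). This is a contact metric manifold which is a generalized $(\kappa,\mu)$-manifold with $\kappa=1-\lambda^2$, $\mu=2(1\pm\lambda)$, i.e. its curvature tensor $\tilde R(X,Y)=[\tilde\nabla_X,\tilde\nabla_Y]-\tilde\nabla_{[X,Y]}$ satisfies $\tilde R(X,Y)\xi=(\kappa I+\mu h)(\eta(Y)X-\eta(X)Y)$, where $2h$ is the Lie derivative of $\phi$ along $\xi$. A curve parametrized by arclength in a contact metric $3$-manifold is Legendre if $\eta(\gamma')=0$. A smooth map $f:M\to\tilde M$ is biharmonic if its bitension field $\tau_2(f)=-\Delta_f\tau(f)+\mathrm{trace}\,\tilde R(\tau(f),df)df$ vanishes, where $\tau(f)$ is the tension field and $\Delta_f=-\mathrm{trace}(\nabla^f\nabla^f-\nabla^f_\nabla)$;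 an isometric immersion is biharmonic if it is a biharmonic map, and proper biharmonic if it is biharmonic and not minimal (for a curve: not a geodesic). For a curve parametrized by arclength with unit tangent $T$, biharmonicity is $\tilde\nabla_T\tilde\nabla_T\tilde\nabla_T T+\tilde R(\tilde\nabla_T T,T)T=0$. *)

theory Defs
  imports "HOL-Analysis.Analysis"
begin

definition smooth_on :: "real set \<Rightarrow> (real \<Rightarrow> real) \<Rightarrow> bool" where
  "smooth_on S f \<longleftrightarrow> (\<forall>n. \<forall>x\<in>S. ((deriv ^^ n) f) differentiable (at x))"

definition pd :: "'n::finite \<Rightarrow> (real^'n \<Rightarrow> real) \<Rightarrow> real^'n \<Rightarrow> real" where
  "pd i F p = deriv (\<lambda>t. F (p + t *\<^sub>R axis i 1)) 0"

(* A Riemannian metric in coordinates: G p $ i $ j = g(d_i, d_j) at p.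
   Christoffel symbols Gamma^k_{ij} of the Levi-Civita connection. *)
definition christoffel :: "(real^'n \<Rightarrow> real^'n^'n) \<Rightarrow> 'n::finite \<Rightarrow> 'n \<Rightarrow> 'n \<Rightarrow> real^'n \<Rightarrow> real" where
  "christoffel G k i j p =
     (\<Sum>l\<in>UNIV. matrix_inv (G p) $ k $ l *
        (pd i (\<lambda>q. G q $ j $ l) p + pd j (\<lambda>q. G q $ i $ l) p - pd l (\<lambda>q. G q $ i $ j) p)) / 2"

(* Riemann curvature R(X,Y)Z = [nabla_X,nabla_Y]Z - nabla_[X,Y] Z at p, in coordinates:
   R(d_i,d_j)d_k = R^l_{ijk} d_l. *)
definition riem :: "(real^'n \<Rightarrow> real^'n^'n) \<Rightarrow> real^'n \<Rightarrow> real^'n \<Rightarrow> real^'n \<Rightarrow> real^'n::finite \<Rightarrow> real^'n" where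
  "riem G X Y Z p = (\<chi> l. \<Sum>i\<in>UNIV. \<Sum>j\<in>UNIV. \<Sum>k\<in>UNIV. X $ i * Y $ j * Z $ k *
      (pd i (christoffel G l j k) p - pd j (christoffel G l i k) p
       + (\<Sum>m\<in>UNIV. christoffel G l i m p * christoffel G m j k p
                    - christoffel G l j m p * christoffel G m i k p)))"

definition velocity :: "(real \<Rightarrow> real^'n::finite) \<Rightarrow> real \<Rightarrow> real^'n" where
  "velocity \<gamma> t = (\<chi> i. deriv (\<lambda>s. \<gamma> s $ i) t)"

definition cov_along :: "(real^'n \<Rightarrow> real^'n^'n) \<Rightarrow> (real \<Rightarrow> real^'n::finite) \<Rightarrow> (real \<Rightarrow> real^'n) \<Rightarrow> real \<Rightarrow> real^'n" where
  "cov_along G \<gamma> V t = (\<chi> k. deriv (\<lambda>s. V s $ k) t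
      + (\<Sum>i\<in>UNIV. \<Sum>j\<in>UNIV. christoffel G k i j (\<gamma> t) * velocity \<gamma> t $ i * V t $ j))"

definition tension_curve :: "(real^'n \<Rightarrow> real^'n^'n) \<Rightarrow> (real \<Rightarrow> real^'n::finite) \<Rightarrow> real \<Rightarrow> real^'n" where
  "tension_curve G \<gamma> = cov_along G \<gamma> (velocity \<gamma>)"

definition geodesic_curve :: "(real^'n \<Rightarrow> real^'n^'n) \<Rightarrow> (real \<Rightarrow> real^'n::finite) \<Rightarrow> bool" where
  "geodesic_curve G \<gamma> \<longleftrightarrow> (\<forall>s. tension_curve G \<gamma> s = 0)"

(* Biharmonic equation for a curve parametrized by arclength:
   nabla_T nabla_T nabla_T T + R(nabla_T T, T) T = 0. *)
definition biharmonic_curve :: "(real^'n \<Rightarrow> real^'n^'n) \<Rightarrow> (real \<Rightarrow> real^'n::finite) \<Rightarrow> bool" where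
  "biharmonic_curve G \<gamma> \<longleftrightarrow>
     (\<forall>s. cov_along G \<gamma> (cov_along G \<gamma> (tension_curve G \<gamma>)) s
          + riem G (tension_curve G \<gamma> s) (velocity \<gamma> s) (velocity \<gamma> s) (\<gamma> s) = 0)"

definition proper_biharmonic_curve :: "(real^'n \<Rightarrow> real^'n^'n) \<Rightarrow> (real \<Rightarrow> real^'n::finite) \<Rightarrow> bool" where
  "proper_biharmonic_curve G \<gamma> \<longleftrightarrow> biharmonic_curve G \<gamma> \<and> \<not> geodesic_curve G \<gamma>"

(* Metric making a frame E orthonormal: E p $ i $ j = i-th coordinate component of e_j(p).
   g_{ij} = g(d_i,d_j) = (E^{-1})^T E^{-1}. *)
definition frame_metric :: "(real^'n \<Rightarrow> real^'n^'n) \<Rightarrow> real^'n::finite \<Rightarrow> real^'n^'n" where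
  "frame_metric E p = transpose (matrix_inv (E p)) ** matrix_inv (E p)"

(* The frame e1 = d_x, e2 = d_y,
   e3 = (eps*2y + f z) d_x + (2 lam(z) x - lam'(z)/(2 lam(z)) y + h z) d_y + d_z,
   where eps = 1 or -1 encodes the sign +-. Coordinates: p$1 = x, p$2 = y, p$3 = z. *)
definition Mframe :: "(real \<Rightarrow> real) \<Rightarrow> (real \<Rightarrow> real) \<Rightarrow> (real \<Rightarrow> real) \<Rightarrow> real \<Rightarrow> real^3 \<Rightarrow> real^3^3" where
  "Mframe lam f h eps p =
     (let x = p $ 1; y = p $ 2; z = p $ 3 in
      vector [vector [1, 0, eps * 2 * y + f z],
              vector [0, 1, 2 * lam z * x - deriv lam z / (2 * lam z) * y + h z],
              vector [0, 0, 1]])"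

definition Mmetric :: "(real \<Rightarrow> real) \<Rightarrow> (real \<Rightarrow> real) \<Rightarrow> (real \<Rightarrow> real) \<Rightarrow> real \<Rightarrow> real^3 \<Rightarrow> real^3^3" where
  "Mmetric lam f h eps = frame_metric (Mframe lam f h eps)"

end

theory Submission
  imports Defs
begin

text \<open>
  Write \<open>\<epsilon> = \<plusminus>1\<close>. In coordinates the frame \<open>(e\<^sub>1, e\<^sub>2, e\<^sub>3)\<close> is a shear matrix with last column \<open>(u, v, 1)\<close>,
  \<open>u = 2\<epsilon>y + f(z)\<close>, \<open>v = 2\<lambda>x - m y + h(z)\<close>, \<open>m = \<lambda>'/(2\<lambda>)\<close>; so the metric, its inverse and
  the Christoffel symbols are explicit polynomials in \<open>u, v\<close> and their gradients. Along the
  line \<open>s \<mapsto> (b, s, c)\<close> these data are affine in \<open>s\<close>, and one finds \<open>\<nabla>\<^sub>TT = m e\<^sub>3\<close>,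
  \<open>\<nabla>\<^sub>T\<nabla>\<^sub>T\<nabla>\<^sub>TT = -m((\<lambda> + \<epsilon>)\<^sup>2 + m\<^sup>2) e\<^sub>3\<close> and \<open>R(\<nabla>\<^sub>TT, T)T = m(m' - m\<^sup>2 + \<lambda>\<^sup>2 - 2\<epsilon>\<lambda> - 3) e\<^sub>3\<close>,
  all at \<open>z = c\<close>. Hence the bitension field is \<open>m(m' - 2m\<^sup>2 - 4(1 + \<epsilon>\<lambda>)) e\<^sub>3\<close>: the curve is a
  geodesic iff \<open>\<lambda>'(c) = 0\<close>, and otherwise biharmonic iff the bracket vanishes, which is
  the stated condition divided by \<open>2\<lambda>\<^sup>2\<close>.
\<close>

lemma matrix_inv_unique:
  fixes A B :: "'a::comm_ring_1^'n^'n"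
  assumes "A ** B = mat 1" "B ** A = mat 1"
  shows "matrix_inv A = B"
proof -
  define C where "C = matrix_inv A"
  have "\<exists>A'. A ** A' = mat 1 \<and> A' ** A = mat 1" using assms by blast
  from someI_ex[OF this] have C: "C ** A = mat 1"
    unfolding C_def matrix_inv_def by simp
  have "C = C ** (A ** B)" by (simp add: assms)
  also have "\<dots> = (C ** A) ** B" by (simp add: matrix_mul_assoc)
  also have "\<dots> = B" by (simp add: C)
  finally show ?thesis unfolding C_def .
qed

definition shear_frame :: "real \<Rightarrow> real \<Rightarrow> real^3^3" where
  "shear_frame a b = vector [vector [1, 0, a], vector [0, 1, b], vector [0, 0, 1]]"

definition shear_metric :: "real \<Rightarrow> real \<Rightarrow> real^3^3" where
  "shear_metric a b =
     vector [vector [1, 0, -a], vector [0, 1, -b], vector [-a, -b, 1 + a\<^sup>2 + b\<^sup>2]]"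

definition shear_metric_inv :: "real \<Rightarrow> real \<Rightarrow> real^3^3" where
  "shear_metric_inv a b =
     vector [vector [1 + a\<^sup>2, a * b, a], vector [a * b, 1 + b\<^sup>2, b], vector [a, b, 1]]"

lemma matrix_inv_shear_frame: "matrix_inv (shear_frame a b) = shear_frame (- a) (- b)"
  by (rule matrix_inv_unique)
     (simp_all add: shear_frame_def matrix_matrix_mult_def vec_eq_iff forall_3 sum_3 mat_def)

lemma frame_metric_shear_frame:
  "frame_metric (\<lambda>q. shear_frame (A q) (B q)) = (\<lambda>q. shear_metric (A q) (B q))"
  unfolding frame_metric_def matrix_inv_shear_frame
  by (simp add: fun_eq_iff shear_frame_def shear_metric_def matrix_matrix_mult_def vec_eq_iff forall_3 sum_3 transpose_def power2_eq_square)

lemma matrix_inv_shear_metric: "matrix_inv (shear_metric a b) = shear_metric_inv a b"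
  by (rule matrix_inv_unique)
     (simp_all add: shear_metric_def shear_metric_inv_def matrix_matrix_mult_def vec_eq_iff
       forall_3 sum_3 mat_def algebra_simps power2_eq_square)

lemma pd_has_derivative:
  assumes "(F has_derivative F') (at q)"
  shows "pd i F q = F' (axis i 1)"
proof -
  have "((\<lambda>t::real. q + t *\<^sub>R axis i 1) has_derivative (\<lambda>t. t *\<^sub>R axis i 1)) (at 0)"
    by (auto intro!: derivative_eq_intros)
  from has_derivative_compose[OF this] assms
  have "((\<lambda>t. F (q + t *\<^sub>R axis i 1)) has_derivative (\<lambda>t. F' (t *\<^sub>R axis i 1))) (at 0)"
    by simp
  moreover have "(\<lambda>t. F' (t *\<^sub>R axis i 1)) = (\<lambda>t. F' (axis i 1) * t)"
    using linear_scale[OF has_derivative_linear[OF assms]] by (auto simp: mult.commute)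
  ultimately have "((\<lambda>t. F (q + t *\<^sub>R axis i 1)) has_real_derivative F' (axis i 1)) (at 0)"
    by (simp add: has_field_derivative_def)
  then show ?thesis unfolding pd_def by (rule DERIV_imp_deriv)
qed

lemma has_derivative_vec_nth_comp:
  assumes "(g has_real_derivative D) (at (q $ i))"
  shows "((\<lambda>q. g (q $ i)) has_derivative (\<lambda>v. D * v $ i)) (at q)"
proof -
  have "((\<lambda>q. q $ i) has_derivative (\<lambda>v. v $ i)) (at q)"
    by (rule bounded_linear_imp_has_derivative[OF bounded_linear_vec_nth])
  from has_derivative_compose[OF this] assms show ?thesis
    by (simp add: has_field_derivative_def)
qed

lemma smooth_on_has_real_derivative:
  "smooth_on I g \<Longrightarrow> z \<in> I \<Longrightarrow> (g has_real_derivative deriv g z) (at z)"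
  using DERIV_deriv_iff_real_differentiable unfolding smooth_on_def
  by (metis funpow_0)

lemma smooth_on_deriv: "smooth_on I g \<Longrightarrow> smooth_on I (deriv g)"
proof -
  have "(deriv ^^ n) (deriv g) = (deriv ^^ Suc n) g" for n
    by (simp only: funpow_Suc_right comp_apply)
  then show "smooth_on I g \<Longrightarrow> smooth_on I (deriv g)"
    unfolding smooth_on_def by metis
qed

definition shear_metric_diff :: "real \<Rightarrow> real \<Rightarrow> real \<Rightarrow> real \<Rightarrow> real^3^3" where
  "shear_metric_diff a b da db =
     vector [vector [0, 0, -da], vector [0, 0, -db], vector [-da, -db, 2 * a * da + 2 * b * db]]"

lemma shear_metric_has_derivative:
  assumes "(A has_derivative A') (at q)" "(B has_derivative B') (at q)"
  shows "((\<lambda>q. shear_metric (A q) (B q) $ j $ l) has_derivative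
           (\<lambda>v. shear_metric_diff (A q) (B q) (A' v) (B' v) $ j $ l)) (at q)"
proof -
  have "((\<lambda>q. - A q) has_derivative (\<lambda>v. - A' v)) (at q)"
    "((\<lambda>q. - B q) has_derivative (\<lambda>v. - B' v)) (at q)"
    "((\<lambda>q. 1 + (A q)\<^sup>2 + (B q)\<^sup>2) has_derivative (\<lambda>v. 2 * A q * A' v + 2 * B q * B' v)) (at q)"
    using assms by (auto intro!: derivative_eq_intros)
  moreover have "j = 1 \<or> j = 2 \<or> j = 3" "l = 1 \<or> l = 2 \<or> l = 3"
    using exhaust_3 by auto
  ultimately show ?thesis
    by (elim disjE) (simp_all add: shear_metric_def shear_metric_diff_def)
qed

text \<open>Here \<open>da\<close> and \<open>db\<close> are the gradients of the entries \<open>a\<close> and \<open>b\<close>.\<close>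

definition shear_christoffel :: "real \<Rightarrow> real \<Rightarrow> real^3 \<Rightarrow> real^3 \<Rightarrow> 3 \<Rightarrow> 3 \<Rightarrow> 3 \<Rightarrow> real" where
  "shear_christoffel a b da db k i j =
     (\<Sum>l\<in>UNIV. shear_metric_inv a b $ k $ l *
        (shear_metric_diff a b (da $ i) (db $ i) $ j $ l + shear_metric_diff a b (da $ j) (db $ j) $ i $ l
         - shear_metric_diff a b (da $ l) (db $ l) $ i $ j)) / 2"

lemma christoffel_shear_metric:
  assumes "(A has_derivative (\<lambda>v. dA \<bullet> v)) (at q)" "(B has_derivative (\<lambda>v. dB \<bullet> v)) (at q)"
  shows "christoffel (\<lambda>q. shear_metric (A q) (B q)) k i j q = shear_christoffel (A q) (B q) dA dB k i j"
  unfolding christoffel_def matrix_inv_shear_metric shear_christoffel_def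
    pd_has_derivative[OF shear_metric_has_derivative[OF assms]]
  by (simp add: inner_axis)

definition shear_metric_inv_diff :: "real \<Rightarrow> real \<Rightarrow> real \<Rightarrow> real \<Rightarrow> real^3^3" where
  "shear_metric_inv_diff a b da db =
     vector [vector [2 * a * da, da * b + a * db, da],
             vector [da * b + a * db, 2 * b * db, db],
             vector [da, db, 0]]"

definition shear_metric_diff_diff ::
    "real \<Rightarrow> real \<Rightarrow> real \<Rightarrow> real \<Rightarrow> real \<Rightarrow> real \<Rightarrow> real \<Rightarrow> real \<Rightarrow> real^3^3" where
  "shear_metric_diff_diff a b \<alpha> \<beta> da db u w =
     vector [vector [0, 0, -u], vector [0, 0, -w],
             vector [-u, -w, 2 * (\<alpha> * da + a * u) + 2 * (\<beta> * db + b * w)]]"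

definition shear_christoffel_diff ::
    "real \<Rightarrow> real \<Rightarrow> real \<Rightarrow> real \<Rightarrow> real^3 \<Rightarrow> real^3 \<Rightarrow> real^3 \<Rightarrow> real^3 \<Rightarrow> 3 \<Rightarrow> 3 \<Rightarrow> 3 \<Rightarrow> real"
  where
  "shear_christoffel_diff a b \<alpha> \<beta> da db u w k i j =
     (\<Sum>l\<in>UNIV. shear_metric_inv_diff a b \<alpha> \<beta> $ k $ l *
        (shear_metric_diff a b (da $ i) (db $ i) $ j $ l + shear_metric_diff a b (da $ j) (db $ j) $ i $ l
         - shear_metric_diff a b (da $ l) (db $ l) $ i $ j)
      + shear_metric_inv a b $ k $ l *
        (shear_metric_diff_diff a b \<alpha> \<beta> (da $ i) (db $ i) (u $ i) (w $ i) $ j $ l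
         + shear_metric_diff_diff a b \<alpha> \<beta> (da $ j) (db $ j) (u $ j) (w $ j) $ i $ l
         - shear_metric_diff_diff a b \<alpha> \<beta> (da $ l) (db $ l) (u $ l) (w $ l) $ i $ j)) / 2"

lemma shear_metric_inv_affine_has_derivative:
  "((\<lambda>t. shear_metric_inv (a + \<alpha> * t) (b + \<beta> * t) $ k $ l)
      has_real_derivative shear_metric_inv_diff a b \<alpha> \<beta> $ k $ l) (at 0)"
proof -
  have "k = 1 \<or> k = 2 \<or> k = 3" "l = 1 \<or> l = 2 \<or> l = 3" using exhaust_3 by auto
  then show ?thesis
    by (elim disjE) (auto simp: shear_metric_inv_def shear_metric_inv_diff_def algebra_simps
        intro!: derivative_eq_intros)
qed

lemma shear_metric_diff_affine_has_derivative:
  "((\<lambda>t. shear_metric_diff (a + \<alpha> * t) (b + \<beta> * t) (da + u * t) (db + w * t) $ k $ l)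
      has_real_derivative shear_metric_diff_diff a b \<alpha> \<beta> da db u w $ k $ l) (at 0)"
proof -
  have "k = 1 \<or> k = 2 \<or> k = 3" "l = 1 \<or> l = 2 \<or> l = 3" using exhaust_3 by auto
  then show ?thesis
    by (elim disjE) (auto simp: shear_metric_diff_def shear_metric_diff_diff_def algebra_simps
        intro!: derivative_eq_intros)
qed

lemma shear_christoffel_affine_has_derivative:
  "((\<lambda>t. shear_christoffel (a + \<alpha> * t) (b + \<beta> * t) (da + t *\<^sub>R u) (db + t *\<^sub>R w) k i j)
      has_real_derivative shear_christoffel_diff a b \<alpha> \<beta> da db u w k i j) (at 0)"
proof -
  have diff: "((\<lambda>t. shear_metric_diff (a + \<alpha> * t) (b + \<beta> * t)
                    ((da + t *\<^sub>R u) $ p) ((db + t *\<^sub>R w) $ p) $ j $ l)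
      has_real_derivative shear_metric_diff_diff a b \<alpha> \<beta> (da $ p) (db $ p) (u $ p) (w $ p) $ j $ l)
      (at 0)" for p j l
    using shear_metric_diff_affine_has_derivative[of a \<alpha> b \<beta> "da $ p" "u $ p" "db $ p" "w $ p" j l]
    by (simp add: mult.commute)
  show ?thesis
    unfolding shear_christoffel_def shear_christoffel_diff_def
    by (rule DERIV_cdivide, rule DERIV_sum, rule DERIV_mult'[THEN DERIV_cong],
        rule shear_metric_inv_affine_has_derivative, (rule DERIV_diff DERIV_add diff)+,
        simp add: algebra_simps)
qed

definition half_log_deriv :: "(real \<Rightarrow> real) \<Rightarrow> real \<Rightarrow> real" where
  "half_log_deriv lam z = deriv lam z / (2 * lam z)"

definition Mframe_a :: "real \<Rightarrow> (real \<Rightarrow> real) \<Rightarrow> real^3 \<Rightarrow> real" where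
  "Mframe_a eps f q = eps * 2 * q $ 2 + f (q $ 3)"

definition Mframe_b :: "(real \<Rightarrow> real) \<Rightarrow> (real \<Rightarrow> real) \<Rightarrow> real^3 \<Rightarrow> real" where
  "Mframe_b lam h q = 2 * lam (q $ 3) * q $ 1 - half_log_deriv lam (q $ 3) * q $ 2 + h (q $ 3)"

lemma Mmetric_eq_shear_metric:
  "Mmetric lam f h eps = (\<lambda>q. shear_metric (Mframe_a eps f q) (Mframe_b lam h q))"
proof -
  have "Mframe lam f h eps = (\<lambda>q. shear_frame (Mframe_a eps f q) (Mframe_b lam h q))"
    by (simp add: fun_eq_iff Mframe_def Let_def shear_frame_def Mframe_a_def Mframe_b_def
        half_log_deriv_def)
  then show ?thesis
    by (simp add: Mmetric_def frame_metric_shear_frame)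
qed

lemma half_log_deriv_has_real_derivative:
  assumes "smooth_on I lam" "z \<in> I" "lam z > 0"
  shows "(half_log_deriv lam has_real_derivative
           (lam z * deriv (deriv lam) z - (deriv lam z)\<^sup>2) / (2 * (lam z)\<^sup>2)) (at z)"
proof -
  have "((\<lambda>z. deriv lam z / (2 * lam z)) has_real_derivative
          (deriv (deriv lam) z * (2 * lam z) - deriv lam z * (2 * deriv lam z)) / (2 * lam z)\<^sup>2) (at z)"
    using assms smooth_on_has_real_derivative[OF smooth_on_deriv] smooth_on_has_real_derivative
    by (auto intro!: derivative_eq_intros simp: power2_eq_square)
  moreover have "(deriv (deriv lam) z * (2 * lam z) - deriv lam z * (2 * deriv lam z)) / (2 * lam z)\<^sup>2
      = (lam z * deriv (deriv lam) z - (deriv lam z)\<^sup>2) / (2 * (lam z)\<^sup>2)"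
    using assms(3) by (simp add: field_simps power2_eq_square)
  ultimately show ?thesis
    unfolding half_log_deriv_def[abs_def] by simp
qed

definition Mframe_a_grad :: "real \<Rightarrow> (real \<Rightarrow> real) \<Rightarrow> real^3 \<Rightarrow> real^3" where
  "Mframe_a_grad eps f q = vector [0, eps * 2, deriv f (q $ 3)]"

definition Mframe_b_grad :: "(real \<Rightarrow> real) \<Rightarrow> (real \<Rightarrow> real) \<Rightarrow> real^3 \<Rightarrow> real^3" where
  "Mframe_b_grad lam h q =
     vector [2 * lam (q $ 3), - half_log_deriv lam (q $ 3),
             2 * deriv lam (q $ 3) * q $ 1 - deriv (half_log_deriv lam) (q $ 3) * q $ 2 + deriv h (q $ 3)]"

lemma Mframe_a_has_derivative:
  assumes "smooth_on I f" "q $ 3 \<in> I"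
  shows "(Mframe_a eps f has_derivative (\<lambda>v. Mframe_a_grad eps f q \<bullet> v)) (at q)"
proof -
  have "((\<lambda>q. eps * 2 * q $ 2 + f (q $ 3)) has_derivative
          (\<lambda>v. eps * 2 * v $ 2 + deriv f (q $ 3) * v $ 3)) (at q)"
    using assms by (intro derivative_intros has_derivative_vec_nth_comp
        bounded_linear_imp_has_derivative[OF bounded_linear_vec_nth] smooth_on_has_real_derivative)
  then show ?thesis
    by (simp add: Mframe_a_def[abs_def] Mframe_a_grad_def inner_vec_def sum_3)
qed

lemma Mframe_b_has_derivative:
  assumes "smooth_on I lam" "smooth_on I h" "q $ 3 \<in> I" "lam (q $ 3) > 0"
  shows "(Mframe_b lam h has_derivative (\<lambda>v. Mframe_b_grad lam h q \<bullet> v)) (at q)"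
proof -
  have "(half_log_deriv lam has_real_derivative deriv (half_log_deriv lam) (q $ 3)) (at (q $ 3))"
    using half_log_deriv_has_real_derivative[OF assms(1,3,4)] by (simp add: DERIV_imp_deriv)
  then have "((\<lambda>q. 2 * lam (q $ 3) * q $ 1 - half_log_deriv lam (q $ 3) * q $ 2 + h (q $ 3))
      has_derivative (\<lambda>v. 2 * lam (q $ 3) * v $ 1 + 2 * (deriv lam (q $ 3) * v $ 3) * q $ 1
         - (half_log_deriv lam (q $ 3) * v $ 2 + deriv (half_log_deriv lam) (q $ 3) * v $ 3 * q $ 2)
         + deriv h (q $ 3) * v $ 3)) (at q)"
    using assms
    by (intro derivative_eq_intros)
       (auto intro!: has_derivative_vec_nth_comp smooth_on_has_real_derivative
         bounded_linear_imp_has_derivative[OF bounded_linear_vec_nth])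
  then show ?thesis
    by (simp add: Mframe_b_def[abs_def] Mframe_b_grad_def inner_vec_def sum_3 algebra_simps)
qed

lemma christoffel_Mmetric:
  assumes "smooth_on I lam" "smooth_on I f" "smooth_on I h" "q $ 3 \<in> I" "lam (q $ 3) > 0"
  shows "christoffel (Mmetric lam f h eps) k i j q =
    shear_christoffel (Mframe_a eps f q) (Mframe_b lam h q)
      (Mframe_a_grad eps f q) (Mframe_b_grad lam h q) k i j"
  unfolding Mmetric_eq_shear_metric
  using assms by (intro christoffel_shear_metric Mframe_a_has_derivative Mframe_b_has_derivative)

lemma velocity_y_line: "velocity (\<lambda>s. vector [b, s, c] :: real^3) = (\<lambda>s. vector [0, 1, 0])"
  by (simp add: fun_eq_iff velocity_def vec_eq_iff forall_3)

lemma deriv_mult_affine: "deriv (\<lambda>s. u * (v * s + w)) x = u * (v::real)"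
  by (rule DERIV_imp_deriv) (auto intro!: derivative_eq_intros)

lemma deriv_mult_affine': "deriv (\<lambda>s. u * (w - v * s + z)) x = - u * (v::real)"
  by (rule DERIV_imp_deriv) (auto intro!: derivative_eq_intros)

locale Mmetric_y_line =
  fixes I :: "real set" and lam f h :: "real \<Rightarrow> real" and eps b c :: real
  assumes open_I: "open I" and c_in_I: "c \<in> I" and lam_pos: "\<forall>z\<in>I. lam z > 0"
    and smooth_lam: "smooth_on I lam" and smooth_f: "smooth_on I f" and smooth_h: "smooth_on I h"
    and eps: "eps = 1 \<or> eps = -1"
begin

abbreviation "G \<equiv> Mmetric lam f h eps"
abbreviation "\<gamma> \<equiv> (\<lambda>s. vector [b, s, c] :: real^3)"
abbreviation "m \<equiv> half_log_deriv lam c"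
abbreviation "m' \<equiv> deriv (half_log_deriv lam) c"

abbreviation "e3 s \<equiv> vector [eps * 2 * s + f c, 2 * lam c * b - m * s + h c, 1] :: real^3"

lemma christoffel_y_line:
  "christoffel G k i j (\<gamma> s) =
     shear_christoffel (eps * 2 * s + f c) (2 * lam c * b - m * s + h c)
       (vector [0, eps * 2, deriv f c]) (vector [2 * lam c, - m, 2 * deriv lam c * b - m' * s + deriv h c])
       k i j"
  using christoffel_Mmetric[OF smooth_lam smooth_f smooth_h, of "\<gamma> s"] c_in_I lam_pos
  by (simp add: Mframe_a_def Mframe_b_def Mframe_a_grad_def Mframe_b_grad_def)

lemma tension_y_line: "tension_curve G \<gamma> = (\<lambda>s. m *\<^sub>R e3 s)"
  by (simp add: fun_eq_iff tension_curve_def cov_along_def velocity_y_line christoffel_y_line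
      vec_eq_iff forall_3 sum_3 shear_christoffel_def shear_metric_inv_def shear_metric_diff_def)

lemma cov_tension_y_line:
  "cov_along G \<gamma> (tension_curve G \<gamma>) = (\<lambda>s. vector [m * (lam c + eps), - m * m, 0])"
  using eps
  by (simp add: fun_eq_iff cov_along_def tension_y_line velocity_y_line christoffel_y_line
      vec_eq_iff forall_3 sum_3 deriv_mult_affine deriv_mult_affine')
    (simp add: shear_christoffel_def sum_3 shear_metric_inv_def shear_metric_diff_def, elim disjE,
      simp_all add: field_simps power2_eq_square)

lemma cov2_tension_y_line:
  "cov_along G \<gamma> (cov_along G \<gamma> (tension_curve G \<gamma>)) =
     (\<lambda>s. (- m * ((lam c + eps)\<^sup>2 + m\<^sup>2)) *\<^sub>R e3 s)"
  using eps
  by (simp add: fun_eq_iff cov_tension_y_line cov_along_def velocity_y_line christoffel_y_line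
      vec_eq_iff forall_3 sum_3)
    (simp add: shear_christoffel_def sum_3 shear_metric_inv_def shear_metric_diff_def, elim disjE,
      simp_all add: field_simps power2_eq_square)

lemma christoffel_22:
  "q $ 3 \<in> I \<Longrightarrow>
     christoffel G l 2 2 q = half_log_deriv lam (q $ 3) * vector [Mframe_a eps f q, Mframe_b lam h q, 1] $ l"
  using exhaust_3[of l] christoffel_Mmetric[OF smooth_lam smooth_f smooth_h, of q eps l 2 2] lam_pos
  by (auto simp: shear_christoffel_def sum_3 shear_metric_inv_def shear_metric_diff_def
      Mframe_a_grad_def Mframe_b_grad_def)

lemma christoffel_22_has_derivative:
  assumes "q $ 3 \<in> I"
  shows "(christoffel G l 2 2 has_derivative
    (\<lambda>v. deriv (half_log_deriv lam) (q $ 3) * v $ 3 * vector [Mframe_a eps f q, Mframe_b lam h q, 1] $ l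
        + half_log_deriv lam (q $ 3) *
          vector [Mframe_a_grad eps f q \<bullet> v, Mframe_b_grad lam h q \<bullet> v, 0] $ l)) (at q)"
proof -
  have m: "((\<lambda>q. half_log_deriv lam (q $ 3)) has_derivative
             (\<lambda>v. deriv (half_log_deriv lam) (q $ 3) * v $ 3)) (at q)"
    using half_log_deriv_has_real_derivative[OF smooth_lam assms] assms lam_pos
    by (intro has_derivative_vec_nth_comp) (simp add: DERIV_imp_deriv)
  have a: "(Mframe_a eps f has_derivative (\<lambda>v. Mframe_a_grad eps f q \<bullet> v)) (at q)"
    by (rule Mframe_a_has_derivative[OF smooth_f assms])
  have b: "(Mframe_b lam h has_derivative (\<lambda>v. Mframe_b_grad lam h q \<bullet> v)) (at q)"
    using assms lam_pos by (intro Mframe_b_has_derivative[OF smooth_lam smooth_h]) auto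
  have "((\<lambda>q. half_log_deriv lam (q $ 3) * vector [Mframe_a eps f q, Mframe_b lam h q, 1] $ l)
    has_derivative
    (\<lambda>v. deriv (half_log_deriv lam) (q $ 3) * v $ 3 * vector [Mframe_a eps f q, Mframe_b lam h q, 1] $ l
        + half_log_deriv lam (q $ 3) *
          vector [Mframe_a_grad eps f q \<bullet> v, Mframe_b_grad lam h q \<bullet> v, 0] $ l)) (at q)"
    using exhaust_3[of l] has_derivative_mult[OF m a] has_derivative_mult[OF m b] m
    by (auto simp: algebra_simps)
  moreover have "open ((\<lambda>x::real^3. x $ 3) -` I)"
    by (rule open_vimage_vec_nth[OF open_I])
  ultimately show ?thesis
    by (rule has_derivative_transform_within_open) (use assms christoffel_22 in auto)
qed

lemma pd_christoffel_22_y_line: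
  "pd i (christoffel G l 2 2) (\<gamma> s) =
     m' * axis i 1 $ 3 * vector [Mframe_a eps f (\<gamma> s), Mframe_b lam h (\<gamma> s), 1] $ l
     + m * vector [Mframe_a_grad eps f (\<gamma> s) $ i, Mframe_b_grad lam h (\<gamma> s) $ i, 0] $ l"
  using pd_has_derivative[OF christoffel_22_has_derivative, of "\<gamma> s" i l] c_in_I
  by (simp add: inner_axis)

text \<open>Moving in the \<open>y\<close>-direction stays on the line, where the data of the shear metric are affine.\<close>

lemma pd2_christoffel_y_line:
  "pd 2 (christoffel G l i 2) (\<gamma> s) =
     shear_christoffel_diff (eps * 2 * s + f c) (2 * lam c * b - m * s + h c) (eps * 2) (- m)
       (vector [0, eps * 2, deriv f c])
       (vector [2 * lam c, - m, 2 * deriv lam c * b - m' * s + deriv h c])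
       0 (vector [0, 0, - m']) l i 2"
proof -
  have line: "(\<lambda>t. christoffel G l i 2 (\<gamma> s + t *\<^sub>R axis 2 1)) = (\<lambda>t.
    shear_christoffel ((eps * 2 * s + f c) + (eps * 2) * t) ((2 * lam c * b - m * s + h c) + (- m) * t)
      (vector [0, eps * 2, deriv f c] + t *\<^sub>R 0)
      (vector [2 * lam c, - m, 2 * deriv lam c * b - m' * s + deriv h c] + t *\<^sub>R vector [0, 0, - m'])
      l i 2)" (is "?L = ?R")
  proof
    fix t
    have "\<gamma> s + t *\<^sub>R axis 2 1 = \<gamma> (s + t)"
      by (simp add: vec_eq_iff forall_3 axis_def)
    moreover have "(vector [2 * lam c, - m, 2 * deriv lam c * b - m' * (s + t) + deriv h c] :: real^3) =
        vector [2 * lam c, - m, 2 * deriv lam c * b - m' * s + deriv h c] + t *\<^sub>R vector [0, 0, - m']"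
      by (simp add: vec_eq_iff forall_3 algebra_simps)
    ultimately show "?L t = ?R t"
      using christoffel_y_line[of l i 2 "s + t"] by (simp add: algebra_simps)
  qed
  show ?thesis
    unfolding pd_def line by (rule DERIV_imp_deriv[OF shear_christoffel_affine_has_derivative])
qed

lemma curvature_y_line:
  "riem G (tension_curve G \<gamma> s) (velocity \<gamma> s) (velocity \<gamma> s) (\<gamma> s) =
     (m * (m' - m\<^sup>2 + (lam c)\<^sup>2 - 2 * eps * lam c - 3)) *\<^sub>R e3 s"
  using eps
  by (simp add: tension_y_line velocity_y_line riem_def vec_eq_iff forall_3 sum_3
      pd_christoffel_22_y_line pd2_christoffel_y_line christoffel_y_line)
    (simp add: shear_christoffel_diff_def shear_christoffel_def sum_3 shear_metric_inv_diff_def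
      shear_metric_diff_diff_def shear_metric_inv_def shear_metric_diff_def Mframe_a_def Mframe_b_def
      Mframe_a_grad_def Mframe_b_grad_def axis_def, elim disjE, simp_all add: field_simps power2_eq_square)

lemma bitension_y_line:
  "cov_along G \<gamma> (cov_along G \<gamma> (tension_curve G \<gamma>)) s
     + riem G (tension_curve G \<gamma> s) (velocity \<gamma> s) (velocity \<gamma> s) (\<gamma> s)
   = (m * (m' - 2 * m\<^sup>2 - 4 * eps * lam c - 4)) *\<^sub>R e3 s"
proof -
  have "m * (m' - m\<^sup>2 + (lam c)\<^sup>2 - 2 * eps * lam c - 3) - m * ((lam c + eps)\<^sup>2 + m\<^sup>2)
      = m * (m' - 2 * m\<^sup>2 - 4 * eps * lam c - 4)"
    using eps by (auto simp: algebra_simps power2_eq_square)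
  then show ?thesis
    by (simp add: cov2_tension_y_line curvature_y_line flip: scaleR_diff_left)
qed

lemma e3_nonzero: "e3 s \<noteq> 0"
  by (simp add: vec_eq_iff forall_3)

lemma geodesic_y_line_iff: "geodesic_curve G \<gamma> \<longleftrightarrow> m = 0"
  by (simp add: geodesic_curve_def tension_y_line e3_nonzero)

lemma biharmonic_y_line_iff: "biharmonic_curve G \<gamma> \<longleftrightarrow> m * (m' - 2 * m\<^sup>2 - 4 * eps * lam c - 4) = 0"
  by (simp add: biharmonic_curve_def bitension_y_line e3_nonzero)

lemma proper_biharmonic_y_line_iff:
  "proper_biharmonic_curve G \<gamma> \<longleftrightarrow> m \<noteq> 0 \<and> m' - 2 * m\<^sup>2 - 4 * eps * lam c - 4 = 0"
  by (auto simp: proper_biharmonic_curve_def geodesic_y_line_iff biharmonic_y_line_iff)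

end

theorem proposition5p1:
  fixes I :: "real set" and lam f h :: "real \<Rightarrow> real" and eps b c :: real
  assumes "open I" and "is_interval I" and "I \<noteq> {}"
    and "smooth_on I lam" and "\<forall>z\<in>I. lam z > 0" and "\<not> (\<exists>k. \<forall>z\<in>I. lam z = k)"
    and "smooth_on I f" and "smooth_on I h"
    and "eps = 1 \<or> eps = -1"
    and "c \<in> I"
  shows "proper_biharmonic_curve (Mmetric lam f h eps) (\<lambda>s. vector [b, s, c])
    \<longleftrightarrow> deriv lam c \<noteq> 0
        \<and> lam c * deriv (deriv lam) c - 2 * (deriv lam c)^2 - 8 * (lam c)^2 * (1 + eps * lam c) = 0"
proof -
  interpret Mmetric_y_line I lam f h eps b c
    using assms by unfold_locales auto
  have pos: "lam c > 0"
    using assms by auto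
  have "deriv (half_log_deriv lam) c = (lam c * deriv (deriv lam) c - (deriv lam c)\<^sup>2) / (2 * (lam c)\<^sup>2)"
    using assms by (intro DERIV_imp_deriv half_log_deriv_has_real_derivative) auto
  then have "deriv (half_log_deriv lam) c - 2 * (half_log_deriv lam c)\<^sup>2 - 4 * eps * lam c - 4
      = (lam c * deriv (deriv lam) c - 2 * (deriv lam c)\<^sup>2 - 8 * (lam c)\<^sup>2 * (1 + eps * lam c))
        / (2 * (lam c)\<^sup>2)"
    using pos by (simp add: half_log_deriv_def field_simps power2_eq_square)
  moreover have "half_log_deriv lam c \<noteq> 0 \<longleftrightarrow> deriv lam c \<noteq> 0"
    using pos by (simp add: half_log_deriv_def)
  ultimately show ?thesis
    using pos by (simp add: proper_biharmonic_y_line_iff)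
qed

end
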